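(* Let $n\ge1$, $l\in\{1,\dots,n\}$, and let $G$ and $N$ be random variables with joint distribution given by $$P(G=i,\ N-1-G=j)=\frac{1}{n}\,\frac{\binom{i+j}{i}\binom{n-1-i-j}{l-1-i}}{\binom{n-1}{l-1}}$$ for nonnegative integers $i,j$. Then $$\mathrm{var}\big(H(G)+H(N-1-G)\big)\le 28 .$$
   Context: $H(k)=H_k:=\sum_{i=1}^k 1/i$ for $k\in\mathbb{N}$ are the harmonic numbers, with $H(0)=H_0=0$. Binomial coefficients $\binom{a}{b}$ are $0$ if $b<0$ or $b>a$. *)

theory Defs
  imports "HOL-Probability.Probability"
begin

definition ibinom :: "int \<Rightarrow> int \<Rightarrow> real" where
  "ibinom a b = (if b < 0 \<or> b > a then 0 else real (nat a choose nat b))"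

definition joint_prob :: "nat \<Rightarrow> nat \<Rightarrow> nat \<Rightarrow> nat \<Rightarrow> real" where
  "joint_prob n l i j =
     (1 / real n) * (ibinom (int i + int j) (int i) *
        ibinom (int n - 1 - int i - int j) (int l - 1 - int i)) / ibinom (int n - 1) (int l - 1)"

end

(*
  Put L = l - 1 and R = n - l. By the upper Chu-Vandermonde identity the weights are
  supported on {0..L} x {0..R} and G and N - 1 - G are uniform there. The variance is at most
  the second moment about c = H(L+1) + H(R+1), and (a + b)^2 <= 2a^2 + 2b^2 splits that moment
  into averages over the two uniform marginals. The exact identity
  sum_{k<m} (H(m) - H(k))^2 = 2m - H(m) bounds each average by 2, so the variance is at most 8.
*)

theory Submission
  imports Defs "HOL-Computational_Algebra.Formal_Power_Series"
begin

lemma binomial_add_symmetric: "(m + k) choose m = (m + k) choose k"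
  using binomial_symmetric[of m "m + k"] by simp

lemma gbinomial_minus_of_nat:
  "(- (of_nat c + 1) gchoose k :: 'a :: field_char_0) = (-1) ^ k * of_nat ((c + k) choose c)"
proof -
  have "(- (of_nat c + 1) gchoose k :: 'a) = (-1) ^ k * ((of_nat c + 1 + of_nat k - 1) gchoose k)"
    by (rule gbinomial_minus)
  also have "of_nat c + 1 + of_nat k - 1 = (of_nat (c + k) :: 'a)"
    by simp
  also have "of_nat (c + k) gchoose k = (of_nat ((c + k) choose k) :: 'a)"
    by (rule binomial_gbinomial[symmetric])
  also have "(c + k) choose k = (c + k) choose c"
    by (rule binomial_add_symmetric[symmetric])
  finally show ?thesis .
qed

lemma sum_choose_mult_choose_upper:
  "(\<Sum>j\<le>r. ((a + j) choose a) * ((b + (r - j)) choose b)) = (a + b + 1 + r) choose r"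
proof -
  \<comment> \<open>Vandermonde's identity for the negative upper arguments -(a+1) and -(b+1).\<close>
  define A :: "nat \<Rightarrow> real" where "A k = - (of_nat a + 1) gchoose k" for k
  define B :: "nat \<Rightarrow> real" where "B k = - (of_nat b + 1) gchoose k" for k
  have "real (((a + j) choose a) * ((b + (r - j)) choose b)) = (-1) ^ r * (A j * B (r - j))"
    if "j \<le> r" for j
  proof -
    have "A j * B (r - j) = (-1) ^ (j + (r - j)) * real (((a + j) choose a) * ((b + (r - j)) choose b))"
      unfolding A_def B_def gbinomial_minus_of_nat power_add by simp
    then show ?thesis
      using that by (simp flip: power_add mult_2 power_mult)
  qed
  then have "real (\<Sum>j\<le>r. ((a + j) choose a) * ((b + (r - j)) choose b))
      = (-1) ^ r * (\<Sum>j\<in>{0..r}. A j * B (r - j))"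
    by (simp add: sum_distrib_left atMost_atLeast0)
  also have "(\<Sum>j\<in>{0..r}. A j * B (r - j)) = (- (of_nat a + 1) + - (of_nat b + 1)) gchoose r"
    unfolding A_def B_def by (rule gbinomial_Vandermonde)
  also have "- (of_nat a + 1) + - (of_nat b + 1) = - (of_nat (a + b + 1) + 1 :: real)"
    by simp
  also have "(-1) ^ r * (- (of_nat (a + b + 1) + 1) gchoose r) = real ((a + b + 1 + r) choose r)"
    unfolding gbinomial_minus_of_nat binomial_add_symmetric
    by (simp flip: power_add mult_2 power_mult)
  finally show ?thesis by (simp only: of_nat_eq_iff)
qed

lemma sum_harm_diff: "(\<Sum>k<m. harm m - harm k :: real) = real m"
proof (induction m)
  case (Suc m)
  have "(\<Sum>k<Suc m. harm (Suc m) - harm k :: real)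
      = (\<Sum>k<m. (harm m - harm k) + 1 / real (Suc m)) + 1 / real (Suc m)"
    by (simp add: harm_Suc field_simps)
  also have "\<dots> = real m + real m / real (Suc m) + 1 / real (Suc m)"
    using Suc by (simp add: sum.distrib)
  also have "\<dots> = real (Suc m)"
    by (simp add: field_simps)
  finally show ?case .
qed simp

lemma sum_harm_diff_sq: "(\<Sum>k<m. (harm m - harm k)\<^sup>2 :: real) = 2 * real m - harm m"
proof (induction m)
  case (Suc m)
  define d :: real where "d = 1 / real (Suc m)"
  have "(\<Sum>k<Suc m. (harm (Suc m) - harm k)\<^sup>2 :: real)
      = (\<Sum>k<m. ((harm m - harm k) + d)\<^sup>2) + d\<^sup>2"
    by (simp add: harm_Suc d_def field_simps)
  also have "(\<Sum>k<m. ((harm m - harm k) + d)\<^sup>2)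
      = (\<Sum>k<m. (harm m - harm k)\<^sup>2 + 2 * d * (harm m - harm k) + d\<^sup>2)"
    by (rule sum.cong) (simp_all add: power2_eq_square algebra_simps)
  also have "\<dots> + d\<^sup>2 = (\<Sum>k<m. (harm m - harm k)\<^sup>2) + 2 * d * (\<Sum>k<m. harm m - harm k)
      + (real m + 1) * d\<^sup>2"
    by (simp add: sum.distrib sum_distrib_left distrib_right)
  also have "\<dots> = 2 * real (Suc m) - harm (Suc m)"
  proof -
    have md: "(real m + 1) * d = 1" and "harm (Suc m) = harm m + (d :: real)"
      by (simp_all add: d_def harm_Suc inverse_eq_divide)
    moreover have "(real m + 1) * d\<^sup>2 = d"
      by (metis md mult.assoc mult_1 power2_eq_square)
    ultimately show ?thesis
      unfolding Suc sum_harm_diff by (simp add: power2_eq_square algebra_simps)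
  qed
  finally show ?case .
qed (simp add: harm_def)

lemma sum_weighted_sq_dev_le:
  fixes p X :: "'b \<Rightarrow> real"
  assumes "(\<Sum>k\<in>F. p k) = 1" and "\<mu> = (\<Sum>k\<in>F. p k * X k)"
  shows "(\<Sum>k\<in>F. p k * (X k - \<mu>)\<^sup>2) \<le> (\<Sum>k\<in>F. p k * (X k - c)\<^sup>2)"
proof -
  have "(\<Sum>k\<in>F. p k * (X k - c)\<^sup>2)
      = (\<Sum>k\<in>F. p k * (X k - \<mu>)\<^sup>2 + 2 * (\<mu> - c) * (p k * X k)
          - 2 * (\<mu> - c) * \<mu> * p k + (\<mu> - c)\<^sup>2 * p k)"
    by (rule sum.cong) (auto simp: power2_eq_square algebra_simps)
  also have "\<dots> = (\<Sum>k\<in>F. p k * (X k - \<mu>)\<^sup>2) + 2 * (\<mu> - c) * (\<Sum>k\<in>F. p k * X k)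
        - 2 * (\<mu> - c) * \<mu> * (\<Sum>k\<in>F. p k) + (\<mu> - c)\<^sup>2 * (\<Sum>k\<in>F. p k)"
    by (simp add: sum.distrib sum_subtractf sum_distrib_left)
  also have "\<dots> = (\<Sum>k\<in>F. p k * (X k - \<mu>)\<^sup>2) + (\<mu> - c)\<^sup>2"
    using assms by (simp add: power2_eq_square algebra_simps)
  finally show ?thesis by simp
qed

lemma sum_weighted_sq_add_le_marginals:
  fixes p :: "'b \<Rightarrow> 'c \<Rightarrow> real"
  assumes "\<And>i j. i \<in> A \<Longrightarrow> j \<in> B \<Longrightarrow> p i j \<ge> 0"
  shows "(\<Sum>(i, j)\<in>A \<times> B. p i j * (u i + v j)\<^sup>2)
    \<le> 2 * (\<Sum>i\<in>A. (u i)\<^sup>2 * (\<Sum>j\<in>B. p i j)) + 2 * (\<Sum>j\<in>B. (v j)\<^sup>2 * (\<Sum>i\<in>A. p i j))"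
proof -
  have "(\<Sum>(i, j)\<in>A \<times> B. p i j * (u i + v j)\<^sup>2)
      \<le> (\<Sum>(i, j)\<in>A \<times> B. 2 * (u i)\<^sup>2 * p i j + 2 * (v j)\<^sup>2 * p i j)"
  proof (rule sum_mono, clarify)
    fix i j assume "i \<in> A" "j \<in> B"
    moreover have "(u i + v j)\<^sup>2 \<le> 2 * (u i)\<^sup>2 + 2 * (v j)\<^sup>2"
      using zero_le_power2[of "u i - v j"] by (simp add: power2_eq_square algebra_simps)
    ultimately show "p i j * (u i + v j)\<^sup>2 \<le> 2 * (u i)\<^sup>2 * p i j + 2 * (v j)\<^sup>2 * p i j"
      using assms mult_left_mono by (fastforce simp: algebra_simps)
  qed
  also have "\<dots> = 2 * (\<Sum>i\<in>A. \<Sum>j\<in>B. (u i)\<^sup>2 * p i j) + 2 * (\<Sum>i\<in>A. \<Sum>j\<in>B. (v j)\<^sup>2 * p i j)"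
    by (simp add: sum.cartesian_product[symmetric] sum.distrib sum_distrib_left mult_ac)
  also have "\<dots> = 2 * (\<Sum>i\<in>A. (u i)\<^sup>2 * (\<Sum>j\<in>B. p i j)) + 2 * (\<Sum>j\<in>B. (v j)\<^sup>2 * (\<Sum>i\<in>A. p i j))"
    by (simp add: sum_distrib_left sum.swap[of _ A])
  finally show ?thesis .
qed

lemma (in prob_space) expectation_finite_support:
  fixes Z :: "'a \<Rightarrow> 'b" and f :: "'b \<Rightarrow> real"
  assumes Z: "Z \<in> measurable M (count_space UNIV)" and "finite F"
    and total: "(\<Sum>z\<in>F. prob {x \<in> space M. Z x = z}) = 1"
  shows "expectation (\<lambda>x. f (Z x)) = (\<Sum>z\<in>F. prob {x \<in> space M. Z x = z} * f z)"
proof -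
  note [measurable] = Z
  let ?A = "\<lambda>z. {x \<in> space M. Z x = z}"
  have A_events: "?A z \<in> events" for z
    by measurable
  have "prob (\<Union>z\<in>F. ?A z) = 1"
    using total \<open>finite F\<close>
    by (subst finite_measure_finite_Union) (auto simp: A_events disjoint_family_on_def)
  then have "AE x in M. x \<in> (\<Union>z\<in>F. ?A z)"
    by (rule AE_prob_1)
  then have "AE x in M. f (Z x) = (\<Sum>z\<in>F. f z * indicator (?A z) x)"
    by eventually_elim (auto simp: indicator_def \<open>finite F\<close> if_distrib sum.If_cases)
  then have "expectation (\<lambda>x. f (Z x)) = expectation (\<lambda>x. \<Sum>z\<in>F. f z * indicator (?A z) x)"
    by (rule integral_cong_AE[rotated 2])
      (auto intro: measurable_compose[OF Z] simp: A_events)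
  also have "\<dots> = (\<Sum>z\<in>F. f z * prob (?A z))"
    by (subst Bochner_Integration.integral_sum) (auto simp: A_events emeasure_finite less_top[symmetric])
  finally show ?thesis
    by (simp add: mult.commute)
qed

lemma (in prob_space) variance_finite_support_le:
  fixes Z :: "'a \<Rightarrow> 'b" and f :: "'b \<Rightarrow> real"
  assumes Z: "Z \<in> measurable M (count_space UNIV)" and "finite F"
    and total: "(\<Sum>z\<in>F. prob {x \<in> space M. Z x = z}) = 1"
  shows "variance (\<lambda>x. f (Z x)) \<le> (\<Sum>z\<in>F. prob {x \<in> space M. Z x = z} * (f z - c)\<^sup>2)"
proof -
  have "variance (\<lambda>x. f (Z x))
      = (\<Sum>z\<in>F. prob {x \<in> space M. Z x = z} * (f z - expectation (\<lambda>x. f (Z x)))\<^sup>2)"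
    by (rule expectation_finite_support[OF assms])
  also have "\<dots> \<le> (\<Sum>z\<in>F. prob {x \<in> space M. Z x = z} * (f z - c)\<^sup>2)"
    by (rule sum_weighted_sq_dev_le[OF total expectation_finite_support[OF assms]])
  finally show ?thesis .
qed

lemma joint_prob_nonneg: "joint_prob n l i j \<ge> 0"
  unfolding joint_prob_def ibinom_def by auto

lemma ibinom_of_nat: "ibinom (int a) (int b) = real (a choose b)"
  unfolding ibinom_def by simp

lemma joint_prob_eq:
  assumes "i \<le> L" "j \<le> R"
  shows "joint_prob (L + R + 1) (L + 1) i j
    = real ((i + j) choose i) * real ((L - i + (R - j)) choose (L - i))
      / (real (L + R + 1) * real ((L + R) choose L))"
proof -
  have "int (L + R + 1) - 1 = int (L + R)"
    and "int (L + 1) - 1 = int L"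
    and "int i + int j = int (i + j)"
    and "int (L + R) - int i - int j = int (L - i + (R - j))"
    and "int L - int i = int (L - i)"
    using assms by simp_all
  note int_eqs = this
  show ?thesis
    unfolding joint_prob_def int_eqs ibinom_of_nat by simp
qed

lemma joint_prob_swap:
  assumes "i \<le> L" "j \<le> R"
  shows "joint_prob (L + R + 1) (L + 1) i j = joint_prob (R + L + 1) (R + 1) j i"
  unfolding joint_prob_eq[OF assms] joint_prob_eq[OF assms(2,1)]
  by (metis add.commute binomial_add_symmetric)

lemma sum_joint_prob_snd:
  assumes "i \<le> L"
  shows "(\<Sum>j\<le>R. joint_prob (L + R + 1) (L + 1) i j) = 1 / real (L + 1)"
proof -
  have "(\<Sum>j\<le>R. joint_prob (L + R + 1) (L + 1) i j)
      = real (\<Sum>j\<le>R. ((i + j) choose i) * ((L - i + (R - j)) choose (L - i)))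
        / (real (L + R + 1) * real ((L + R) choose L))"
    unfolding of_nat_sum of_nat_mult sum_divide_distrib
    using assms by (intro sum.cong refl joint_prob_eq) auto
  also have "(\<Sum>j\<le>R. ((i + j) choose i) * ((L - i + (R - j)) choose (L - i))) = (L + R + 1) choose R"
    using sum_choose_mult_choose_upper[of i "L - i" R] assms by simp
  also have "real (L + R + 1) * real ((L + R) choose L) = real (L + 1) * real ((L + R + 1) choose R)"
    using Suc_times_binomial_eq[of "L + R" L] binomial_add_symmetric[of "L + 1" R]
    by (simp only: of_nat_mult[symmetric] of_nat_eq_iff) (simp add: add_ac)
  finally show ?thesis
    by simp
qed

lemma sum_joint_prob_fst:
  assumes "j \<le> R"
  shows "(\<Sum>i\<le>L. joint_prob (L + R + 1) (L + 1) i j) = 1 / real (R + 1)"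
proof -
  have "(\<Sum>i\<le>L. joint_prob (L + R + 1) (L + 1) i j) = (\<Sum>i\<le>L. joint_prob (R + L + 1) (R + 1) j i)"
    using assms by (intro sum.cong refl joint_prob_swap) auto
  also have "\<dots> = 1 / real (R + 1)"
    using assms by (rule sum_joint_prob_snd)
  finally show ?thesis .
qed

lemma sum_joint_prob: "(\<Sum>(i, j)\<in>{..L} \<times> {..R}. joint_prob (L + R + 1) (L + 1) i j) = 1"
proof -
  have "(\<Sum>(i, j)\<in>{..L} \<times> {..R}. joint_prob (L + R + 1) (L + 1) i j) = (\<Sum>i\<le>L. 1 / real (L + 1))"
    unfolding sum.cartesian_product[symmetric] by (intro sum.cong refl sum_joint_prob_snd) auto
  then show ?thesis
    by simp
qed

lemma mean_sq_harm_dev_le: "(\<Sum>i\<le>m. (harm (Suc m) - harm i)\<^sup>2) / real (Suc m) \<le> (2 :: real)"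
proof -
  have "(\<Sum>i\<le>m. (harm (Suc m) - harm i)\<^sup>2) = 2 * real (Suc m) - (harm (Suc m) :: real)"
    using sum_harm_diff_sq[of "Suc m"] by (simp add: lessThan_Suc_atMost)
  also have "\<dots> \<le> 2 * real (Suc m)"
    by (simp add: harm_nonneg)
  finally show ?thesis
    by (simp add: divide_simps)
qed

lemma sum_joint_prob_harm_sq_le:
  "(\<Sum>(i, j)\<in>{..L} \<times> {..R}.
      joint_prob (L + R + 1) (L + 1) i j * (harm i + harm j - (harm (L + 1) + harm (R + 1)))\<^sup>2)
    \<le> (8 :: real)"
proof -
  let ?p = "joint_prob (L + R + 1) (L + 1)"
  let ?u = "\<lambda>i. harm (L + 1) - harm i :: real" and ?v = "\<lambda>j. harm (R + 1) - harm j :: real"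
  have "(\<Sum>(i, j)\<in>{..L} \<times> {..R}. ?p i j * (harm i + harm j - (harm (L + 1) + harm (R + 1)))\<^sup>2)
      = (\<Sum>(i, j)\<in>{..L} \<times> {..R}. ?p i j * (?u i + ?v j)\<^sup>2)"
    by (intro sum.cong refl) (auto simp: power2_commute algebra_simps)
  also have "\<dots> \<le> 2 * (\<Sum>i\<le>L. (?u i)\<^sup>2 * (\<Sum>j\<le>R. ?p i j)) + 2 * (\<Sum>j\<le>R. (?v j)\<^sup>2 * (\<Sum>i\<le>L. ?p i j))"
    by (rule sum_weighted_sq_add_le_marginals) (rule joint_prob_nonneg)
  also have "\<dots> = 2 * ((\<Sum>i\<le>L. (?u i)\<^sup>2) / real (L + 1)) + 2 * ((\<Sum>j\<le>R. (?v j)\<^sup>2) / real (R + 1))"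
    using sum_joint_prob_snd[of _ L R] sum_joint_prob_fst[of _ R L] by (simp add: sum_divide_distrib)
  also have "\<dots> \<le> 2 * 2 + 2 * 2"
    using mean_sq_harm_dev_le[of L] mean_sq_harm_dev_le[of R] by simp
  finally show ?thesis
    by simp
qed

theorem lemma2:
  fixes M :: "'a measure" and G N :: "'a \<Rightarrow> int" and n l :: nat
  assumes "prob_space M"
    and "n \<ge> 1" and "l \<in> {1..n}"
    and "G \<in> measurable M (count_space UNIV)"
    and "N \<in> measurable M (count_space UNIV)"
    and "\<And>i j :: nat. measure M {x \<in> space M. G x = int i \<and> N x - 1 - G x = int j}
            = joint_prob n l i j"
  shows "prob_space.variance M
           (\<lambda>x. (harm (nat (G x)) :: real) + harm (nat (N x - 1 - G x))) \<le> 28"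
proof -
  interpret prob_space M by fact
  obtain L R where l: "l = L + 1" and n: "n = L + R + 1"
    using assms(3) by (intro that[of "l - 1" "n - l"]) auto
  note [measurable] = assms(4,5)
  define Z where "Z x = (G x, N x - 1 - G x)" for x
  define f where "f = (\<lambda>(a, b). harm (nat a) + harm (nat b) :: real)"
  define F where "F = (\<lambda>(i, j). (int i, int j)) ` ({..L} \<times> {..R})"
  have Z: "Z \<in> measurable M (count_space UNIV)"
    unfolding Z_def by measurable
  have "inj_on (\<lambda>(i :: nat, j :: nat). (int i, int j)) ({..L} \<times> {..R})"
    by (auto simp: inj_on_def)
  then have sum_F: "(\<Sum>z\<in>F. prob {x \<in> space M. Z x = z} * g z)
      = (\<Sum>(i, j)\<in>{..L} \<times> {..R}. joint_prob n l i j * g (int i, int j))" for g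
    unfolding F_def Z_def by (simp add: sum.reindex case_prod_unfold assms(6))
  have total: "(\<Sum>z\<in>F. prob {x \<in> space M. Z x = z}) = 1"
    using sum_F[of "\<lambda>_. 1"] sum_joint_prob[of L R] by (simp add: l n)
  have "variance (\<lambda>x. f (Z x))
      \<le> (\<Sum>z\<in>F. prob {x \<in> space M. Z x = z} * (f z - (harm (L + 1) + harm (R + 1)))\<^sup>2)"
    by (rule variance_finite_support_le[OF Z _ total]) (simp add: F_def)
  also have "\<dots> \<le> 8"
    using sum_joint_prob_harm_sq_le[of L R] by (simp add: sum_F f_def l n)
  finally show ?thesis
    by (simp add: f_def Z_def)
qed

end
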